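(* For all $j,k\ge1$ and at every point of $\mathcal H$, the vector fields of the central system satisfy the exactness condition $$\frac{\partial H^{(j)}}{\partial t_k}=\frac{\partial H^{(k)}}{\partial t_j},$$ i.e. the $H^{(j)}$-component of $X_k$ equals the $H^{(k)}$-component of $X_j$.
   Context: Let $z$ be a formal variable and $\mathcal L$ the space of formal Laurent series $\sum_{j\le N} l_j z^j$ (finitely many positive powers of $z$). Let $\mathcal H$ be the set of sequences $H=(H^{(k)})_{k\ge0}$ of elements of $\mathcal L$ with $H^{(0)}=1$ and, for $k\ge1$, $H^{(k)}=z^k+\sum_{l\ge1}H^k_l z^{-l}$; the coefficients $H^k_l$ are coordinates on $\mathcal H$, and we set $H^0_l=0$. The central system (CS) is the family of vector fields $X_j$, $j\ge1$, on $\mathcal H$, with associated times $t_j$, defined by $$\frac{\partial H^{(k)}}{\partial t_j}=H^{(j+k)}-H^{(j)}H^{(k)}+\sum_{l=1}^{k}H^j_lH^{(k-l)}+\sum_{l=1}^{j}H^k_lH^{(j-l)},\qquad k\ge0;$$ the right-hand side contains only negative powers of $z$, so this determines the components $X_j(H^k_l)$. *)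

theory Defs
  imports Main
begin

text \<open>Formal Laurent series with finitely many positive powers are represented by
their coefficient functions int => a (coefficient of z^n at n).\<close>

type_synonym 'a laurent = "int \<Rightarrow> 'a"

text \<open>Product of Laurent series: for series bounded above in degree the index set is finite.\<close>
definition lmul :: "'a::comm_ring_1 laurent \<Rightarrow> 'a laurent \<Rightarrow> 'a laurent" where
  "lmul f g n = (\<Sum>i \<in> {i. f i \<noteq> 0 \<and> g (n - i) \<noteq> 0}. f i * g (n - i))"

definition lscale :: "'a::comm_ring_1 \<Rightarrow> 'a laurent \<Rightarrow> 'a laurent" where
  "lscale c f n = c * f n"

text \<open>A point of the space H is given by its coordinates h k l = H^k_l (k,l \<ge> 1);
the convention H^0_l = 0 is built into Hcoord.\<close>
definition Hcoord :: "(nat \<Rightarrow> nat \<Rightarrow> 'a::comm_ring_1) \<Rightarrow> nat \<Rightarrow> nat \<Rightarrow> 'a" where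
  "Hcoord h k l = (if k = 0 \<or> l = 0 then 0 else h k l)"

definition Hser :: "(nat \<Rightarrow> nat \<Rightarrow> 'a::comm_ring_1) \<Rightarrow> nat \<Rightarrow> 'a laurent" where
  "Hser h k n =
     (if k = 0 then (if n = 0 then 1 else 0)
      else if n = int k then 1
      else if n < 0 then Hcoord h k (nat (- n))
      else 0)"

text \<open>Right-hand side of the central system: dH^(k)/dt_j.\<close>
definition CS_rhs :: "(nat \<Rightarrow> nat \<Rightarrow> 'a::comm_ring_1) \<Rightarrow> nat \<Rightarrow> nat \<Rightarrow> 'a laurent" where
  "CS_rhs h j k n =
     Hser h (j + k) n - lmul (Hser h j) (Hser h k) n
     + (\<Sum>l = 1..k. lscale (Hcoord h j l) (Hser h (k - l)) n)
     + (\<Sum>l = 1..j. lscale (Hcoord h k l) (Hser h (j - l)) n)"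

text \<open>Component X_j(H^k_l) of the vector field X_j at the point h: the coefficient
of z^{-l} in the right-hand side.\<close>
definition CS_field :: "(nat \<Rightarrow> nat \<Rightarrow> 'a::comm_ring_1) \<Rightarrow> nat \<Rightarrow> nat \<Rightarrow> nat \<Rightarrow> 'a" where
  "CS_field h j k l = CS_rhs h j k (- int l)"

end

theory Submission
  imports Defs
begin

lemma lmul_commute: "lmul f g = lmul g f"
proof
  fix n
  show "lmul f g n = lmul g f n"
    unfolding lmul_def
    by (rule sum.reindex_bij_witness[where i="\<lambda>i. n - i" and j="\<lambda>i. n - i"])
       (auto simp: mult.commute)
qed

lemma CS_rhs_commute: "CS_rhs h j k = CS_rhs h k j"
proof
  fix n
  show "CS_rhs h j k n = CS_rhs h k j n"
    unfolding CS_rhs_def lmul_commute[of "Hser h j"]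
    by (simp add: add.commute add.left_commute)
qed

theorem mainTheorem3:
  fixes h :: "nat \<Rightarrow> nat \<Rightarrow> 'a::comm_ring_1"
  assumes "j \<ge> 1" and "k \<ge> 1"
  shows "\<forall>l\<ge>1. CS_field h k j l = CS_field h j k l"
  by (simp add: CS_field_def CS_rhs_commute[of h k j])

end
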